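(* Let $k\ge 2$ be an integer and let $E=(C,V)$ be a $k$-Party election such that both $|C|$ and $|V|$ are divisible by $k$. Then $\mathrm{pcc\text{-}agr}(E)=0$ and $\mathrm{pcc^+\text{-}agr}(E)=1/k$.
   Context: An (approval) election is a pair $E=(C,V)$ with candidate set $C$ and a collection of voters $V$; each vote is a binary vector indicating which candidates the voter approves. A $k$-Party election (with $|C|,|V|$ divisible by $k$) is one where $C$ is partitioned into $k$ disjoint groups $C_1,\dots,C_k$ of equal size and $V$ into $k$ disjoint groups $V_1,\dots,V_k$ of equal size, and for each $i\in[k]$ every voter in $V_i$ approves exactly the candidates in $C_i$. Pearson correlation of $x,y\in\mathbb{R}^t$: $\mathrm{pcc}(x,y)=\frac{\sum_i(x[i]-\overline{x})(y[i]-\overline{y})}{\sqrt{\sum_i(x[i]-\overline{x})^2}\sqrt{\sum_i(y[i]-\overline{y})^2}}$ (set to $1$ if $x$ or $y$ is constant). $\mathrm{pcc\text{-}agr}(E)=\frac{1}{|V|^2}\sum_{u\in V}\sum_{v\in V}\mathrm{pcc}(u,v)$ and $\mathrm{pcc^+\text{-}agr}(E)=\frac{1}{|V|^2}\sum_{u\in V}\sum_{v\in V}\max(0,\mathrm{pcc}(u,v))$, summing over all ordered pairs including $u=v$. *)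

theory Defs
  imports Complex_Main
begin

definition vmean :: "'c set \<Rightarrow> ('c \<Rightarrow> real) \<Rightarrow> real" where
  "vmean I x = (\<Sum>i\<in>I. x i) / real (card I)"

definition is_constant :: "'c set \<Rightarrow> ('c \<Rightarrow> real) \<Rightarrow> bool" where
  "is_constant I x \<longleftrightarrow> (\<forall>i\<in>I. \<forall>j\<in>I. x i = x j)"

definition pcc :: "'c set \<Rightarrow> ('c \<Rightarrow> real) \<Rightarrow> ('c \<Rightarrow> real) \<Rightarrow> real" where
  "pcc I x y =
     (if is_constant I x \<or> is_constant I y then 1
      else (\<Sum>i\<in>I. (x i - vmean I x) * (y i - vmean I y)) /
           (sqrt (\<Sum>i\<in>I. (x i - vmean I x)\<^sup>2) * sqrt (\<Sum>i\<in>I. (y i - vmean I y)\<^sup>2)))"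

text \<open>An approval election: candidate set C, voter (index) set V, and the approval
  ballot vote v c (voter v approves candidate c). Voters are indices, so repeated
  ballots are allowed.\<close>

definition ballot :: "('v \<Rightarrow> 'c \<Rightarrow> bool) \<Rightarrow> 'v \<Rightarrow> 'c \<Rightarrow> real" where
  "ballot vote v = (\<lambda>c. if vote v c then 1 else 0)"

definition pcc_agr :: "'c set \<Rightarrow> 'v set \<Rightarrow> ('v \<Rightarrow> 'c \<Rightarrow> bool) \<Rightarrow> real" where
  "pcc_agr C V vote =
     (\<Sum>u\<in>V. \<Sum>v\<in>V. pcc C (ballot vote u) (ballot vote v)) / (real (card V))\<^sup>2"

definition pcc_pos_agr :: "'c set \<Rightarrow> 'v set \<Rightarrow> ('v \<Rightarrow> 'c \<Rightarrow> bool) \<Rightarrow> real" where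
  "pcc_pos_agr C V vote =
     (\<Sum>u\<in>V. \<Sum>v\<in>V. max 0 (pcc C (ballot vote u) (ballot vote v))) / (real (card V))\<^sup>2"

definition k_party_election :: "nat \<Rightarrow> 'c set \<Rightarrow> 'v set \<Rightarrow> ('v \<Rightarrow> 'c \<Rightarrow> bool) \<Rightarrow> bool" where
  "k_party_election k C V vote \<longleftrightarrow>
     (\<exists>Cg :: nat \<Rightarrow> 'c set. \<exists>Vg :: nat \<Rightarrow> 'v set.
        (\<Union>i<k. Cg i) = C \<and> (\<Union>i<k. Vg i) = V \<and>
        (\<forall>i<k. \<forall>j<k. i \<noteq> j \<longrightarrow> Cg i \<inter> Cg j = {} \<and> Vg i \<inter> Vg j = {}) \<and>
        (\<forall>i<k. \<forall>j<k. card (Cg i) = card (Cg j) \<and> card (Vg i) = card (Vg j)) \<and>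
        (\<forall>i<k. \<forall>v\<in>Vg i. \<forall>c\<in>C. vote v c \<longleftrightarrow> c \<in> Cg i))"

end

(* A voter of group i casts the indicator vector of C_i, so the correlation of two
   ballots depends only on the groups of the voters: it is 1 within a group, and for
   two disjoint groups of m candidates each out of N = k m the covariance -m^2/N over
   the variance m - m^2/N gives -1/(k - 1).  Every row of the resulting k x k matrix
   thus sums to 1 + (k - 1) (-1/(k - 1)) = 0, while its positive part sums to 1. *)

theory Submission
  imports Defs "HOL-Library.Indicator_Function"
begin

lemma pcc_cong:
  assumes "\<And>i. i \<in> I \<Longrightarrow> x i = x' i" and "\<And>i. i \<in> I \<Longrightarrow> y i = y' i"
  shows "pcc I x y = pcc I x' y'"
proof -
  have "vmean I x = vmean I x'" "vmean I y = vmean I y'"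
    using assms unfolding vmean_def by (auto intro!: sum.cong)
  moreover have "is_constant I x = is_constant I x'" "is_constant I y = is_constant I y'"
    using assms unfolding is_constant_def by auto
  ultimately show ?thesis
    using assms unfolding pcc_def by (simp cong: sum.cong)
qed

lemma pcc_self:
  assumes "finite I"
  shows "pcc I x x = 1"
proof (cases "is_constant I x")
  case False
  then obtain i where "i \<in> I" "x i \<noteq> vmean I x"
    unfolding is_constant_def by metis
  then have "(\<Sum>j\<in>I. (x j - vmean I x)\<^sup>2) > 0"
    using assms by (intro sum_pos2) auto
  with False show ?thesis
    by (simp add: pcc_def power2_eq_square)
qed (simp add: pcc_def)

lemma sum_centered_products:
  fixes x y :: "'c \<Rightarrow> real"
  assumes "finite I" and "I \<noteq> {}"
  shows "(\<Sum>i\<in>I. (x i - vmean I x) * (y i - vmean I y))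
       = (\<Sum>i\<in>I. x i * y i) - sum x I * sum y I / card I"
proof -
  have sums: "sum x I = card I * vmean I x" "sum y I = card I * vmean I y"
    using assms by (simp_all add: vmean_def)
  have "(\<Sum>i\<in>I. (x i - vmean I x) * (y i - vmean I y))
      = (\<Sum>i\<in>I. x i * y i) - vmean I y * sum x I - vmean I x * sum y I
        + card I * vmean I x * vmean I y"
    by (simp add: algebra_simps sum.distrib sum_subtractf sum_distrib_left)
  also have "\<dots> = (\<Sum>i\<in>I. x i * y i) - sum x I * sum y I / card I"
    unfolding sums using assms by (simp add: field_simps)
  finally show ?thesis .
qed

lemma sum_centered_indicators:
  assumes "finite I" and "I \<noteq> {}" and "A \<subseteq> I" and "B \<subseteq> I"
  shows "(\<Sum>i\<in>I. (indicator A i - vmean I (indicator A)) * (indicator B i - vmean I (indicator B)))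
       = real (card (A \<inter> B)) - real (card A) * real (card B) / real (card I)"
proof -
  have sum_indicator: "sum (indicator S) I = real (card S)" if "S \<subseteq> I" for S
    using sum_mult_indicator[of I "\<lambda>_. 1 :: real" S] assms(1) that by (simp add: Int_absorb1)
  show ?thesis
    using assms
    by (simp add: sum_centered_products indicator_inter_arith[symmetric] sum_indicator le_infI1)
qed

lemma is_constant_indicator_iff:
  assumes "A \<subseteq> I"
  shows "is_constant I (indicator A) \<longleftrightarrow> A = {} \<or> A = I"
  using assms unfolding is_constant_def indicator_def by auto

lemma pcc_disjoint_indicators:
  assumes "finite I" and "A \<subseteq> I" and "B \<subseteq> I" and "A \<inter> B = {}"
    and "card A = a" and "card B = a" and "a > 0"
  shows "pcc I (indicator A) (indicator B) = - real a / (real (card I) - real a)"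
proof -
  have "A \<noteq> {}" and "B \<noteq> {}" and "I \<noteq> {}"
    using assms by auto
  have "card (A \<union> B) = 2 * a"
    using assms by (simp add: card_Un_disjoint finite_subset)
  then have "2 * a \<le> card I"
    using assms by (metis Un_least card_mono)
  then have "A \<noteq> I" and "B \<noteq> I" and N: "real a < real (card I)"
    using assms by auto
  have "\<not> is_constant I (indicator A)" and "\<not> is_constant I (indicator B)"
    using assms \<open>A \<noteq> {}\<close> \<open>B \<noteq> {}\<close> \<open>A \<noteq> I\<close> \<open>B \<noteq> I\<close>
    by (simp_all add: is_constant_indicator_iff)
  moreover have "(\<Sum>i\<in>I. (indicator A i - vmean I (indicator A))\<^sup>2) = a - a * a / card I"
    and "(\<Sum>i\<in>I. (indicator B i - vmean I (indicator B))\<^sup>2) = a - a * a / card I"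
    using sum_centered_indicators[of I A A] sum_centered_indicators[of I B B] assms \<open>I \<noteq> {}\<close>
    by (simp_all add: power2_eq_square)
  moreover have "(\<Sum>i\<in>I. (indicator A i - vmean I (indicator A)) * (indicator B i - vmean I (indicator B)))
      = - (a * a / card I)"
    using sum_centered_indicators[of I A B] assms \<open>I \<noteq> {}\<close> by simp
  moreover have "a - a * a / card I > 0"
    using N assms \<open>I \<noteq> {}\<close> by (simp add: field_simps)
  ultimately have "pcc I (indicator A) (indicator B) = - (a * a / card I) / (a - a * a / card I)"
    by (simp add: pcc_def)
  also have "\<dots> = - real a / (real (card I) - real a)"
    using N assms \<open>I \<noteq> {}\<close> by (simp add: field_simps)
  finally show ?thesis .
qed

lemma sum_UN_constant_on_parts:
  fixes k :: nat and f :: "'a \<Rightarrow> 'b::semiring_1"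
  assumes "finite (\<Union>i<k. P i)"
    and "\<forall>i<k. \<forall>j<k. i \<noteq> j \<longrightarrow> P i \<inter> P j = {}"
    and "\<And>i. i < k \<Longrightarrow> card (P i) = n"
    and "\<And>i x. i < k \<Longrightarrow> x \<in> P i \<Longrightarrow> f x = c i"
  shows "(\<Sum>x\<in>(\<Union>i<k. P i). f x) = of_nat n * (\<Sum>i<k. c i)"
proof -
  have "(\<Sum>x\<in>(\<Union>i<k. P i). f x) = (\<Sum>i<k. \<Sum>x\<in>P i. f x)"
    using assms(1,2) by (intro sum.UNION_disjoint) auto
  also have "\<dots> = (\<Sum>i<k. of_nat n * c i)"
    using assms(3,4) by simp
  finally show ?thesis
    by (simp add: sum_distrib_left)
qed

lemma card_UN_equal_parts:
  fixes k :: nat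
  assumes "finite (\<Union>i<k. P i)"
    and "\<forall>i<k. \<forall>j<k. i \<noteq> j \<longrightarrow> P i \<inter> P j = {}"
    and "\<And>i. i < k \<Longrightarrow> card (P i) = n"
  shows "card (\<Union>i<k. P i) = k * n"
  using sum_UN_constant_on_parts[where f = "\<lambda>_. 1 :: nat" and c = "\<lambda>_. 1", OF assms]
  by simp

lemma pcc_party_indicators:
  assumes "finite C" and "(\<Union>i<k. Cg i) = C"
    and "\<forall>i<k. \<forall>j<k. i \<noteq> j \<longrightarrow> Cg i \<inter> Cg j = {}"
    and "\<And>i. i < k \<Longrightarrow> card (Cg i) = m" and "m > 0" and "i < k" and "j < k"
  shows "pcc C (indicator (Cg i)) (indicator (Cg j)) = (if i = j then 1 else - 1 / (real k - 1))"
proof (cases "i = j")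
  case False
  have "card C = k * m"
    using assms card_UN_equal_parts[of Cg k m] by simp
  moreover have "Cg i \<subseteq> C" and "Cg j \<subseteq> C"
    using assms by auto
  ultimately have "pcc C (indicator (Cg i)) (indicator (Cg j)) = - real m / (real (k * m) - real m)"
    using pcc_disjoint_indicators[of C "Cg i" "Cg j" m] False assms by simp
  also have "\<dots> = - 1 / (real k - 1)"
    using \<open>m > 0\<close> False assms(6,7) by (simp add: field_simps)
  finally show ?thesis
    using False by simp
qed (simp add: pcc_self assms)

(* No assumption k \<ge> 2 is needed: for k = 1 the second summand vanishes, whatever the
   junk value of -1/0. *)
lemma k_party_election_sum_pcc:
  fixes C :: "'c set" and V :: "'v set" and F :: "real \<Rightarrow> real"
  assumes "finite C" and "C \<noteq> {}" and "finite V" and "k_party_election k C V vote"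
  shows "(\<Sum>u\<in>V. \<Sum>v\<in>V. F (pcc C (ballot vote u) (ballot vote v)))
       = (real (card V))\<^sup>2 / k * (F 1 + (real k - 1) * F (- 1 / (real k - 1)))"
proof -
  obtain Cg :: "nat \<Rightarrow> 'c set" and Vg :: "nat \<Rightarrow> 'v set" where
    C: "(\<Union>i<k. Cg i) = C" and V: "(\<Union>i<k. Vg i) = V" and
    disj: "\<forall>i<k. \<forall>j<k. i \<noteq> j \<longrightarrow> Cg i \<inter> Cg j = {} \<and> Vg i \<inter> Vg j = {}" and
    eq_card: "\<forall>i<k. \<forall>j<k. card (Cg i) = card (Cg j) \<and> card (Vg i) = card (Vg j)" and
    votes: "\<forall>i<k. \<forall>v\<in>Vg i. \<forall>c\<in>C. vote v c \<longleftrightarrow> c \<in> Cg i"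
    using assms(4) unfolding k_party_election_def by (elim exE conjE) (rule that)
  have "k > 0"
    using C assms(2) by (cases k) auto
  define m where "m = card (Cg 0)"
  define n where "n = card (Vg 0)"
  have card_Cg: "card (Cg i) = m" and card_Vg: "card (Vg i) = n" if "i < k" for i
    using eq_card \<open>k > 0\<close> that unfolding m_def n_def by blast+
  have "card C = k * m" and card_V: "card V = k * n"
    using card_UN_equal_parts[of Cg k m] card_UN_equal_parts[of Vg k n]
      C V disj card_Cg card_Vg assms(1,3) by auto
  then have "m > 0"
    using assms(1,2) by (metis card_gt_0_iff mult_0_right neq0_conv)
  define p where "p i j = (if i = j then 1 else - 1 / (real k - 1))" for i j :: nat
  have pcc_ballots: "pcc C (ballot vote u) (ballot vote v) = p i j"
    if "i < k" "j < k" "u \<in> Vg i" "v \<in> Vg j" for i j u v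
  proof -
    have "pcc C (ballot vote u) (ballot vote v) = pcc C (indicator (Cg i)) (indicator (Cg j))"
      using votes that by (intro pcc_cong) (simp_all add: ballot_def indicator_def)
    then show ?thesis
      unfolding p_def using pcc_party_indicators[of C Cg k m i j] C disj card_Cg
        \<open>m > 0\<close> assms(1) that by simp
  qed
  have row: "(\<Sum>j<k. F (p i j)) = F 1 + (real k - 1) * F (- 1 / (real k - 1))" if "i < k" for i
  proof -
    have "(\<Sum>j<k. F (p i j)) = (\<Sum>j<k. if j = i then F 1 else F (- 1 / (real k - 1)))"
      by (intro sum.cong) (auto simp: p_def)
    then show ?thesis
      using that by (simp add: sum.delta_remove)
  qed
  have "(\<Sum>u\<in>V. \<Sum>v\<in>V. F (pcc C (ballot vote u) (ballot vote v)))
      = real n * (\<Sum>i<k. real n * (\<Sum>j<k. F (p i j)))"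
    unfolding V[symmetric] using assms(3) V disj card_Vg pcc_ballots
    by (intro sum_UN_constant_on_parts) auto
  also have "\<dots> = real n * real n * k * (F 1 + (real k - 1) * F (- 1 / (real k - 1)))"
    using row by simp
  finally show ?thesis
    using card_V \<open>k > 0\<close> by (simp add: power2_eq_square)
qed

theorem proposition5:
  fixes k :: nat and C :: "'c set" and V :: "'v set" and vote :: "'v \<Rightarrow> 'c \<Rightarrow> bool"
  assumes "k \<ge> 2"
    and "finite C" and "C \<noteq> {}" and "finite V" and "V \<noteq> {}"
    and "k dvd card C" and "k dvd card V"
    and "k_party_election k C V vote"
  shows "pcc_agr C V vote = 0 \<and> pcc_pos_agr C V vote = 1 / real k"
proof -
  \<comment> \<open>The divisibility hypotheses are implied by the equal group sizes.\<close>
  note sum_pcc = k_party_election_sum_pcc[OF assms(2,3,4,8)]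
  have "card V > 0" and "real k - 1 > 0"
    using assms by auto
  moreover have "(\<Sum>u\<in>V. \<Sum>v\<in>V. pcc C (ballot vote u) (ballot vote v)) = 0"
    using sum_pcc[of "\<lambda>x. x"] \<open>real k - 1 > 0\<close> by simp
  moreover have "(\<Sum>u\<in>V. \<Sum>v\<in>V. max 0 (pcc C (ballot vote u) (ballot vote v)))
      = (real (card V))\<^sup>2 / k"
    using sum_pcc[of "max 0"] \<open>real k - 1 > 0\<close> by simp
  ultimately show ?thesis
    unfolding pcc_agr_def pcc_pos_agr_def by simp
qed

end
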